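(* Consider the online resource allocation model described in the context, with unknown expected rewards $r_1>r_2$ and adversarial arrivals, and let $\alpha=r_2/r_1$. In each of the following two scenarios, the competitive ratio of any deterministic or randomized algorithm is at most $1/(2-\alpha)$: (Scenario 1) the sampling probability is $p=0$, so no sample information is available; (Scenario 2) sample information is available but the sampling probability $p\in(0,1)$ is completely unknown to the decision-maker.
   Context: Model: a decision-maker has $m$ units of a divisible resource to allocate to unit-demand agents of two types; an accepted type-$i$ agent ($i\in\{1,2\}$) yields a reward in $\{0,1\}$ with mean $r_i\in(0,1)$, $r_1>r_2$, unknown to the decision-maker. An adversary chooses integers $h,\ell\ge0$. Each of the $h+\ell$ agents is independently sampled with probability $p$; $s_1\sim\mathrm{Bin}(h,p)$, $s_2\sim\mathrm{Bin}(\ell,p)$ are the sampled counts, and sampled agents reveal their realized rewards; $\psi$ is this sample information. The remaining $n_1=h-s_1$ type 1 and $n_2=\ell-s_2$ type 2 agents arrive online in an adversarial order $I$; on each arrival the type is observed and the decision-maker irrevocably accepts (possibly fractionally) or rejects, total allocation at most $m$. $\mathrm{OPT}(I)=r_1\min\{n_1,m\}+r_2\min\{n_2,(m-n_1)^+\}$. The competitive ratio of an algorithm $A$ is $\inf_{(h,\ell)}\mathbb E_\psi[\inf_I\mathbb E[\mathrm{REW}_A(I,\psi)]/\mathrm{OPT}(I)]$ (in Scenario 2 the worst case is also over the unknown $p$), where $\mathrm{REW}_A$ is its cumulative expected reward. *)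

theory Defs
  imports "HOL-Probability.Probability"
begin

datatype atype = Ty1 | Ty2

definition rew :: "real \<Rightarrow> real \<Rightarrow> atype \<Rightarrow> real" where
  "rew r1 r2 t = (case t of Ty1 \<Rightarrow> r1 | Ty2 \<Rightarrow> r2)"

(* Sample information psi = (realized rewards of the sampled type-1 agents,
   realized rewards of the sampled type-2 agents).  s1 ~ Bin(h,p), s2 ~ Bin(l,p),
   each sampled type-i agent reveals an independent Bernoulli(r_i) reward. *)
type_synonym sample_info = "bool list \<times> bool list"

definition sample_pmf :: "real \<Rightarrow> real \<Rightarrow> real \<Rightarrow> nat \<Rightarrow> nat \<Rightarrow> sample_info pmf" where
  "sample_pmf p r1 r2 h l =
     bind_pmf (binomial_pmf h p) (\<lambda>s1.
     bind_pmf (binomial_pmf l p) (\<lambda>s2.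
     bind_pmf (replicate_pmf s1 (bernoulli_pmf r1)) (\<lambda>xs.
     bind_pmf (replicate_pmf s2 (bernoulli_pmf r2)) (\<lambda>ys.
     return_pmf (xs, ys)))))"

(* number of remaining (online) agents of each type *)
definition n1_of :: "nat \<Rightarrow> sample_info \<Rightarrow> nat" where
  "n1_of h \<psi> = h - length (fst \<psi>)"

definition n2_of :: "nat \<Rightarrow> sample_info \<Rightarrow> nat" where
  "n2_of l \<psi> = l - length (snd \<psi>)"

definition orders :: "nat \<Rightarrow> nat \<Rightarrow> atype list set" where
  "orders n1 n2 = {I. length (filter (\<lambda>t. t = Ty1) I) = n1 \<and> length (filter (\<lambda>t. t = Ty2) I) = n2}"

definition OPT :: "real \<Rightarrow> real \<Rightarrow> real \<Rightarrow> atype list \<Rightarrow> real" where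
  "OPT m r1 r2 I =
     (let n1 = real (length (filter (\<lambda>t. t = Ty1) I));
          n2 = real (length (filter (\<lambda>t. t = Ty2) I))
      in r1 * min n1 m + r2 * min n2 (max (m - n1) 0))"

(* A deterministic online policy maps the history of observed types (the prefix of the
   arrival sequence up to and including the current agent) to the (fractional)
   amount allocated to the current agent. *)
definition det_reward :: "real \<Rightarrow> real \<Rightarrow> (atype list \<Rightarrow> real) \<Rightarrow> atype list \<Rightarrow> real" where
  "det_reward r1 r2 f I = (\<Sum>j<length I. rew r1 r2 (I ! j) * f (take (Suc j) I))"

definition feasible_policy :: "real \<Rightarrow> (atype list \<Rightarrow> real) \<Rightarrow> bool" where
  "feasible_policy m f \<longleftrightarrow>
     (\<forall>xs. 0 \<le> f xs \<and> f xs \<le> 1) \<and>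
     (\<forall>I. (\<Sum>j<length I. f (take (Suc j) I)) \<le> m)"

(* A (possibly randomized) algorithm: internal randomness omega drawn from the
   probability space M, and for each omega and sample information psi a feasible
   deterministic online policy. *)
definition is_algorithm :: "real \<Rightarrow> 'w measure \<Rightarrow> ('w \<Rightarrow> sample_info \<Rightarrow> atype list \<Rightarrow> real) \<Rightarrow> bool" where
  "is_algorithm m M A \<longleftrightarrow>
     prob_space M \<and>
     (\<forall>\<psi> xs. (\<lambda>\<omega>. A \<omega> \<psi> xs) \<in> borel_measurable M) \<and>
     (\<forall>\<omega> \<psi>. feasible_policy m (A \<omega> \<psi>))"

definition REW :: "real \<Rightarrow> real \<Rightarrow> 'w measure \<Rightarrow> ('w \<Rightarrow> sample_info \<Rightarrow> atype list \<Rightarrow> real)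
                   \<Rightarrow> sample_info \<Rightarrow> atype list \<Rightarrow> real" where
  "REW r1 r2 M A \<psi> I = (\<integral>\<omega>. det_reward r1 r2 (A \<omega> \<psi>) I \<partial>M)"

(* ratio REW/OPT, with the convention 0/0 = 1 (only for the empty instance) *)
definition ratio :: "real \<Rightarrow> real \<Rightarrow> real \<Rightarrow> 'w measure \<Rightarrow> ('w \<Rightarrow> sample_info \<Rightarrow> atype list \<Rightarrow> real)
                   \<Rightarrow> sample_info \<Rightarrow> atype list \<Rightarrow> real" where
  "ratio m r1 r2 M A \<psi> I =
     (if OPT m r1 r2 I = 0 then 1 else REW r1 r2 M A \<psi> I / OPT m r1 r2 I)"

definition comp_ratio :: "real \<Rightarrow> real \<Rightarrow> real \<Rightarrow> real \<Rightarrow> 'w measure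
                   \<Rightarrow> ('w \<Rightarrow> sample_info \<Rightarrow> atype list \<Rightarrow> real) \<Rightarrow> real" where
  "comp_ratio m r1 r2 p M A =
     (INF hl \<in> (UNIV :: (nat \<times> nat) set).
        measure_pmf.expectation (sample_pmf p r1 r2 (fst hl) (snd hl))
          (\<lambda>\<psi>. INF I \<in> orders (n1_of (fst hl) \<psi>) (n2_of (snd hl) \<psi>). ratio m r1 r2 M A \<psi> I))"

end

theory Submission
  imports Defs
begin

(* Without sample information an algorithm cannot distinguish N >= m type-2 agents from the
   same N type-2 agents followed by N type-1 agents.  If it spends a fraction x of the capacity
   (in expectation) on the type-2 prefix, its ratio is x on the first instance and at most
   alpha x + (1 - x) on the second, and min {x, alpha x + 1 - x} <= 1/(2 - alpha).
   Every feasible policy earns at most OPT, so all ratios lie in [0,1]; hence a sample that is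
   nonempty with probability at most (h + l) p moves the expected ratio by at most (h + l) p,
   which vanishes as p -> 0. *)

lemma fractional_knapsack_bound:
  fixes x1 x2 n1 n2 m r1 r2 :: real
  assumes "0 \<le> x1" "0 \<le> x2" "x1 \<le> n1" "x2 \<le> n2" "x1 + x2 \<le> m" "0 \<le> r2" "r2 \<le> r1"
  shows "r1 * x1 + r2 * x2 \<le> r1 * min n1 m + r2 * min n2 (max (m - n1) 0)"
proof -
  have "(r1 - r2) * x1 \<le> (r1 - r2) * min n1 m"
    using assms by (intro mult_left_mono) auto
  moreover have "r2 * (x1 + x2) \<le> r2 * min (n1 + n2) m"
    using assms by (intro mult_left_mono) auto
  moreover have "min (n1 + n2) m = min n1 m + min n2 (max (m - n1) 0)"
    using assms by (auto simp: min_def max_def)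
  ultimately show ?thesis by (simp add: algebra_simps)
qed

lemma det_reward_split_types:
  "det_reward r1 r2 f I =
     r1 * (\<Sum>j\<in>{j\<in>{..<length I}. I ! j = Ty1}. f (take (Suc j) I))
   + r2 * (\<Sum>j\<in>{j\<in>{..<length I}. I ! j = Ty2}. f (take (Suc j) I))"
proof -
  have "rew r1 r2 (I ! j) * f (take (Suc j) I) =
      r1 * (if I ! j = Ty1 then f (take (Suc j) I) else 0)
    + r2 * (if I ! j = Ty2 then f (take (Suc j) I) else 0)" for j
    by (cases "I ! j") (simp_all add: rew_def)
  moreover have "(\<Sum>j\<in>{j\<in>{..<length I}. I ! j = t}. g j) = (\<Sum>j<length I. if I ! j = t then g j else 0)"
    for t and g :: "nat \<Rightarrow> real"
    by (rule sum.inter_filter) simp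
  ultimately show ?thesis
    unfolding det_reward_def by (simp add: sum.distrib sum_distrib_left)
qed

lemma det_reward_unit: "det_reward 1 1 f I = (\<Sum>j<length I. f (take (Suc j) I))"
  unfolding det_reward_def by (intro sum.cong refl) (simp add: rew_def split: atype.split)

lemma sum_allocations_of_type_le:
  fixes f :: "atype list \<Rightarrow> real"
  assumes "\<And>xs. 0 \<le> f xs \<and> f xs \<le> 1"
  shows "(\<Sum>j\<in>{j\<in>{..<length I}. I ! j = t}. f (take (Suc j) I)) \<le> length (filter (\<lambda>u. u = t) I)"
  using sum_bounded_above[of "{j\<in>{..<length I}. I ! j = t}" "\<lambda>j. f (take (Suc j) I)" 1] assms
  by (simp add: length_filter_conv_card)

lemma det_reward_le_OPT:
  assumes "feasible_policy m f" "0 \<le> r2" "r2 \<le> r1"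
  shows "det_reward r1 r2 f I \<le> OPT m r1 r2 I"
proof -
  define x where "x t = (\<Sum>j\<in>{j\<in>{..<length I}. I ! j = t}. f (take (Suc j) I))" for t
  have bounds: "\<And>xs. 0 \<le> f xs \<and> f xs \<le> 1" using assms(1) by (simp add: feasible_policy_def)
  have "x Ty1 + x Ty2 = det_reward 1 1 f I"
    by (simp add: det_reward_split_types x_def)
  also have "\<dots> \<le> m"
    using assms(1) by (simp add: det_reward_unit feasible_policy_def)
  finally have "x Ty1 + x Ty2 \<le> m" .
  moreover have "0 \<le> x t" "x t \<le> length (filter (\<lambda>u. u = t) I)" for t
    unfolding x_def using bounds sum_allocations_of_type_le[of f] by (auto intro: sum_nonneg)
  ultimately show ?thesis
    using assms(2,3) unfolding det_reward_split_types OPT_def Let_def x_def[symmetric]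
    by (intro fractional_knapsack_bound) auto
qed

lemma is_algorithmD:
  assumes "is_algorithm m M A"
  shows "prob_space M" and "0 \<le> A \<omega> \<psi> xs" and "A \<omega> \<psi> xs \<le> 1"
    and "det_reward 1 1 (A \<omega> \<psi>) I \<le> m" and "feasible_policy m (A \<omega> \<psi>)"
    and "integrable M (\<lambda>\<omega>. A \<omega> \<psi> xs)"
proof -
  show feasible: "prob_space M" "feasible_policy m (A \<omega> \<psi>)" for \<omega>
    using assms unfolding is_algorithm_def by blast+
  show bounds: "0 \<le> A \<omega> \<psi> xs" "A \<omega> \<psi> xs \<le> 1" "det_reward 1 1 (A \<omega> \<psi>) I \<le> m" for \<omega>
    using feasible(2)[of \<omega>] by (auto simp: feasible_policy_def det_reward_unit)
  interpret prob_space M by (fact feasible)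
  have "(\<lambda>\<omega>. A \<omega> \<psi> xs) \<in> borel_measurable M"
    using assms unfolding is_algorithm_def by blast
  then show "integrable M (\<lambda>\<omega>. A \<omega> \<psi> xs)"
    using bounds by (intro integrable_const_bound[where B=1]) auto
qed

lemma integrable_det_reward:
  assumes "is_algorithm m M A"
  shows "integrable M (\<lambda>\<omega>. det_reward r1 r2 (A \<omega> \<psi>) I)"
  unfolding det_reward_def using is_algorithmD(6)[OF assms] by auto

lemma REW_nonneg:
  assumes "is_algorithm m M A" "0 \<le> r2" "r2 \<le> r1"
  shows "0 \<le> REW r1 r2 M A \<psi> I"
  unfolding REW_def det_reward_def using assms is_algorithmD(2)[OF assms(1)]
  by (intro integral_nonneg_AE AE_I2 sum_nonneg mult_nonneg_nonneg) (auto simp: rew_def split: atype.split)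

lemma REW_le_OPT:
  assumes "is_algorithm m M A" "0 \<le> r2" "r2 \<le> r1"
  shows "REW r1 r2 M A \<psi> I \<le> OPT m r1 r2 I"
proof -
  interpret prob_space M using is_algorithmD(1)[OF assms(1)] .
  have "REW r1 r2 M A \<psi> I \<le> (\<integral>\<omega>. OPT m r1 r2 I \<partial>M)"
    unfolding REW_def using assms is_algorithmD(5)[OF assms(1)] integrable_det_reward[OF assms(1)]
    by (intro integral_mono det_reward_le_OPT) auto
  then show ?thesis by (simp add: prob_space)
qed

lemma ratio_nonneg:
  assumes "is_algorithm m M A" "0 \<le> r2" "r2 \<le> r1"
  shows "0 \<le> ratio m r1 r2 M A \<psi> I"
  using REW_nonneg[OF assms, of \<psi> I] REW_le_OPT[OF assms, of \<psi> I] by (simp add: ratio_def)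

lemma ratio_le_one:
  assumes "is_algorithm m M A" "0 \<le> r2" "r2 \<le> r1"
  shows "ratio m r1 r2 M A \<psi> I \<le> 1"
  using REW_nonneg[OF assms, of \<psi> I] REW_le_OPT[OF assms, of \<psi> I]
  by (simp add: ratio_def divide_le_eq_1)

lemma det_reward_snoc:
  "det_reward r1 r2 f (xs @ [t]) = det_reward r1 r2 f xs + rew r1 r2 t * f (xs @ [t])"
  unfolding det_reward_def by (simp add: nth_append take_append)

lemma det_reward_append_replicate:
  "det_reward r1 r2 f (xs @ replicate n t)
     = det_reward r1 r2 f xs + rew r1 r2 t * (\<Sum>j<n. f (xs @ replicate (Suc j) t))"
proof (induction n)
  case (Suc n)
  have "xs @ replicate (Suc n) t = (xs @ replicate n t) @ [t]"
    by (simp add: replicate_append_same)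
  then have "det_reward r1 r2 f (xs @ replicate (Suc n) t)
      = det_reward r1 r2 f (xs @ replicate n t) + rew r1 r2 t * f (xs @ replicate (Suc n) t)"
    by (simp only: det_reward_snoc)
  then show ?case
    using Suc.IH by (simp only: sum.lessThan_Suc distrib_left add.assoc)
qed (simp add: det_reward_def)

lemma min_le_inverse_two_minus:
  fixes a x y :: real
  assumes "a < 1" "x + y \<le> 1"
  shows "min x (a * x + y) \<le> 1 / (2 - a)"
proof (cases "x \<le> 1 / (2 - a)")
  case False
  then have "(1 - a) * (1 / (2 - a)) < (1 - a) * x"
    using assms(1) by (intro mult_strict_left_mono) auto
  moreover have "1 - (1 - a) * (1 / (2 - a)) = 1 / (2 - a)"
    using assms(1) by (simp add: field_simps)
  ultimately have "a * x + y < 1 / (2 - a)"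
    using assms(2) by (simp add: algebra_simps)
  then show ?thesis by simp
qed simp

lemma min_ratio_low_then_high_le:
  assumes "0 < m" "0 < r2" "r2 < r1" "is_algorithm m M A" "m \<le> real N"
  shows "min (ratio m r1 r2 M A \<psi> (replicate N Ty2))
             (ratio m r1 r2 M A \<psi> (replicate N Ty2 @ replicate N Ty1)) \<le> 1 / (2 - r2 / r1)"
proof -
  interpret prob_space M using is_algorithmD(1)[OF assms(4)] .
  define X where "X \<omega> = (\<Sum>j<N. A \<omega> \<psi> (replicate (Suc j) Ty2))" for \<omega>
  define Y where "Y \<omega> = (\<Sum>j<N. A \<omega> \<psi> (replicate N Ty2 @ replicate (Suc j) Ty1))" for \<omega>
  have reward_short: "det_reward r1 r2' (A \<omega> \<psi>) (replicate N Ty2) = r2' * X \<omega>" for r1 r2' \<omega>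
    using det_reward_append_replicate[of r1 r2' "A \<omega> \<psi>" "[]" N Ty2]
    by (simp add: X_def rew_def det_reward_def sum_distrib_left)
  have reward_long: "det_reward r1' r2' (A \<omega> \<psi>) (replicate N Ty2 @ replicate N Ty1)
      = r2' * X \<omega> + r1' * Y \<omega>" for r1' r2' \<omega>
    by (simp add: det_reward_append_replicate reward_short Y_def rew_def)
  have integrable: "integrable M X" "integrable M Y"
    unfolding X_def Y_def using is_algorithmD(6)[OF assms(4)] by auto
  have "X \<omega> + Y \<omega> \<le> m" for \<omega>
    using is_algorithmD(4)[OF assms(4), of \<omega> \<psi> "replicate N Ty2 @ replicate N Ty1"] reward_long[of 1 1 \<omega>]
    by simp
  then have "(\<integral>\<omega>. X \<omega> + Y \<omega> \<partial>M) \<le> m"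
    using integrable by (intro integral_le_const) auto
  then have "integral\<^sup>L M X / m + integral\<^sup>L M Y / m \<le> 1"
    using integrable assms(1) by (simp add: field_simps)
  moreover have "ratio m r1 r2 M A \<psi> (replicate N Ty2) = integral\<^sup>L M X / m"
    using assms by (simp add: ratio_def REW_def reward_short OPT_def)
  moreover have "ratio m r1 r2 M A \<psi> (replicate N Ty2 @ replicate N Ty1)
      = r2 / r1 * (integral\<^sup>L M X / m) + integral\<^sup>L M Y / m"
    using assms integrable by (simp add: ratio_def REW_def reward_long OPT_def field_simps)
  moreover have "r2 / r1 < 1"
    using assms by simp
  ultimately show ?thesis
    using min_le_inverse_two_minus by metis
qed

lemma map_pmf_lengths_sample_pmf:
  "map_pmf (\<lambda>\<psi>. (length (fst \<psi>), length (snd \<psi>))) (sample_pmf p r1 r2 h l)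
     = pair_pmf (binomial_pmf h p) (binomial_pmf l p)"
proof -
  have "bind_pmf (replicate_pmf s1 (bernoulli_pmf r1)) (\<lambda>xs.
          bind_pmf (replicate_pmf s2 (bernoulli_pmf r2)) (\<lambda>ys. return_pmf (length xs, length ys)))
      = return_pmf (s1, s2)" for s1 s2
  proof -
    have "bind_pmf (replicate_pmf s1 (bernoulli_pmf r1)) (\<lambda>xs.
          bind_pmf (replicate_pmf s2 (bernoulli_pmf r2)) (\<lambda>ys. return_pmf (length xs, length ys)))
      = bind_pmf (replicate_pmf s1 (bernoulli_pmf r1)) (\<lambda>xs.
          bind_pmf (replicate_pmf s2 (bernoulli_pmf r2)) (\<lambda>ys. return_pmf (s1, s2)))"
      by (intro bind_pmf_cong refl) (auto simp: set_replicate_pmf)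
    then show ?thesis by (simp add: bind_pmf_const)
  qed
  then show ?thesis
    by (simp add: sample_pmf_def pair_pmf_def map_bind_pmf)
qed

lemma pmf_sample_pmf_Nil:
  assumes "0 \<le> p" "p \<le> 1"
  shows "pmf (sample_pmf p r1 r2 h l) ([], []) = (1 - p) ^ (h + l)"
proof -
  have preimage: "(\<lambda>\<psi>. (length (fst \<psi>), length (snd \<psi>))) -` {(0, 0)} = {([], [])}"
    by auto
  have "pmf (sample_pmf p r1 r2 h l) ([], [])
      = pmf (map_pmf (\<lambda>\<psi>. (length (fst \<psi>), length (snd \<psi>))) (sample_pmf p r1 r2 h l)) (0, 0)"
    unfolding pmf_map preimage by (simp add: measure_pmf_single)
  then show ?thesis
    using assms by (simp add: map_pmf_lengths_sample_pmf pmf_pair power_add)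
qed

lemma expectation_le_value_plus_compl:
  fixes g :: "'a \<Rightarrow> real"
  assumes "\<And>y. 0 \<le> g y" "\<And>y. g y \<le> 1"
  shows "measure_pmf.expectation P g \<le> g x + (1 - pmf P x)"
proof -
  have integrable: "integrable P g" "integrable P (indicator S :: 'a \<Rightarrow> real)" for S
    using assms by (auto intro!: measure_pmf.integrable_const_bound[where B=1])
  have "integrable P (\<lambda>y. g x * indicator {x} y + indicator (- {x}) y)"
    using integrable by simp
  then have "measure_pmf.expectation P g
      \<le> measure_pmf.expectation P (\<lambda>y. g x * indicator {x} y + indicator (- {x}) y)"
    using assms integrable by (intro integral_mono) (auto simp: indicator_def)
  also have "\<dots> = g x * pmf P x + (1 - pmf P x)"
    using measure_pmf.prob_compl[of "{x}" P] integrable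
    by (simp add: measure_pmf_single Compl_eq_Diff_UNIV)
  also have "\<dots> \<le> g x + (1 - pmf P x)"
    using assms pmf_le_1[of P x] by (simp add: mult_left_le)
  finally show ?thesis .
qed

definition worst_order_ratio ::
    "real \<Rightarrow> real \<Rightarrow> real \<Rightarrow> 'w measure \<Rightarrow> ('w \<Rightarrow> sample_info \<Rightarrow> atype list \<Rightarrow> real)
     \<Rightarrow> nat \<Rightarrow> nat \<Rightarrow> sample_info \<Rightarrow> real" where
  "worst_order_ratio m r1 r2 M A h l \<psi> =
     (INF I \<in> orders (n1_of h \<psi>) (n2_of l \<psi>). ratio m r1 r2 M A \<psi> I)"

lemma comp_ratio_worst_order_ratio:
  "comp_ratio m r1 r2 p M A =
     (INF hl. measure_pmf.expectation (sample_pmf p r1 r2 (fst hl) (snd hl))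
                (worst_order_ratio m r1 r2 M A (fst hl) (snd hl)))"
  unfolding comp_ratio_def worst_order_ratio_def[abs_def] ..

lemma replicate_in_orders: "replicate a Ty1 @ replicate b Ty2 \<in> orders a b"
  by (simp add: orders_def)

context
  fixes m r1 r2 :: real and M :: "'w measure" and A :: "'w \<Rightarrow> sample_info \<Rightarrow> atype list \<Rightarrow> real"
  assumes algorithm: "is_algorithm m M A" and rewards: "0 \<le> r2" "r2 \<le> r1"
begin

lemma bdd_below_ratio: "bdd_below ((\<lambda>I. ratio m r1 r2 M A \<psi> I) ` S)"
  using ratio_nonneg[OF algorithm rewards] by (intro bdd_belowI2[where m=0])

lemma worst_order_ratio_le_ratio:
  "I \<in> orders (n1_of h \<psi>) (n2_of l \<psi>) \<Longrightarrow> worst_order_ratio m r1 r2 M A h l \<psi> \<le> ratio m r1 r2 M A \<psi> I"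
  unfolding worst_order_ratio_def by (intro cINF_lower bdd_below_ratio)

lemma worst_order_ratio_nonneg: "0 \<le> worst_order_ratio m r1 r2 M A h l \<psi>"
proof -
  have "orders (n1_of h \<psi>) (n2_of l \<psi>) \<noteq> {}"
    using replicate_in_orders by blast
  then show ?thesis
    unfolding worst_order_ratio_def by (intro cINF_greatest ratio_nonneg[OF algorithm rewards])
qed

lemma worst_order_ratio_le_one: "worst_order_ratio m r1 r2 M A h l \<psi> \<le> 1"
  using worst_order_ratio_le_ratio[OF replicate_in_orders] ratio_le_one[OF algorithm rewards]
  by (rule order_trans)

lemma comp_ratio_le_expectation:
  "comp_ratio m r1 r2 p M A
     \<le> measure_pmf.expectation (sample_pmf p r1 r2 h l) (worst_order_ratio m r1 r2 M A h l)"
proof -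
  have "bdd_below (range (\<lambda>hl. measure_pmf.expectation (sample_pmf p r1 r2 (fst hl) (snd hl))
                          (worst_order_ratio m r1 r2 M A (fst hl) (snd hl))))"
    using worst_order_ratio_nonneg by (intro bdd_belowI2[where m=0] integral_nonneg_AE AE_I2) auto
  from cINF_lower[OF this, of "(h, l)"] show ?thesis
    unfolding comp_ratio_worst_order_ratio by simp
qed

lemma comp_ratio_nonneg: "0 \<le> comp_ratio m r1 r2 p M A"
  unfolding comp_ratio_worst_order_ratio using worst_order_ratio_nonneg
  by (intro cINF_greatest integral_nonneg_AE AE_I2) auto

lemma comp_ratio_le_ratio_without_sample:
  assumes "0 \<le> p" "p \<le> 1" "I \<in> orders h l"
  shows "comp_ratio m r1 r2 p M A \<le> ratio m r1 r2 M A ([], []) I + real (h + l) * p"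
proof -
  have "1 - real (h + l) * p \<le> (1 - p) ^ (h + l)"
    using Bernoulli_inequality[of "- p" "h + l"] assms by simp
  then have "1 - pmf (sample_pmf p r1 r2 h l) ([], []) \<le> real (h + l) * p"
    using pmf_sample_pmf_Nil[OF assms(1,2)] by simp
  moreover have "worst_order_ratio m r1 r2 M A h l ([], []) \<le> ratio m r1 r2 M A ([], []) I"
    using assms(3) by (intro worst_order_ratio_le_ratio) (simp add: n1_of_def n2_of_def)
  moreover have "measure_pmf.expectation (sample_pmf p r1 r2 h l) (worst_order_ratio m r1 r2 M A h l)
      \<le> worst_order_ratio m r1 r2 M A h l ([], []) + (1 - pmf (sample_pmf p r1 r2 h l) ([], []))"
    by (intro expectation_le_value_plus_compl worst_order_ratio_nonneg worst_order_ratio_le_one)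
  ultimately show ?thesis
    using comp_ratio_le_expectation[of p h l] by linarith
qed

end

lemma comp_ratio_le:
  assumes "0 < m" "0 < r2" "r2 < r1" "is_algorithm m M A" "0 \<le> p" "p \<le> 1"
  shows "comp_ratio m r1 r2 p M A \<le> 1 / (2 - r2 / r1) + 2 * real (nat \<lceil>m\<rceil>) * p"
proof -
  define N where "N = nat \<lceil>m\<rceil>"
  have rewards: "0 \<le> r2" "r2 \<le> r1"
    using assms(2,3) by simp_all
  have "comp_ratio m r1 r2 p M A \<le> ratio m r1 r2 M A ([], []) (replicate N Ty2) + real N * p"
    using comp_ratio_le_ratio_without_sample[OF assms(4) rewards assms(5,6), of _ 0 N]
    by (simp add: orders_def)
  moreover have "comp_ratio m r1 r2 p M A
      \<le> ratio m r1 r2 M A ([], []) (replicate N Ty2 @ replicate N Ty1) + 2 * real N * p"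
    using comp_ratio_le_ratio_without_sample[OF assms(4) rewards assms(5,6), of _ N N]
    by (simp add: orders_def)
  moreover have "real N * p \<le> 2 * real N * p"
    using assms(5) by simp
  moreover have "m \<le> real N"
    unfolding N_def by linarith
  then have "min (ratio m r1 r2 M A ([], []) (replicate N Ty2))
      (ratio m r1 r2 M A ([], []) (replicate N Ty2 @ replicate N Ty1)) \<le> 1 / (2 - r2 / r1)"
    by (rule min_ratio_low_then_high_le[OF assms(1-4)])
  ultimately show ?thesis
    unfolding N_def[symmetric] min_le_iff_disj by linarith
qed

theorem proposition1:
  fixes m r1 r2 :: real
    and M :: "'w measure"
    and A :: "'w \<Rightarrow> sample_info \<Rightarrow> atype list \<Rightarrow> real"
  assumes "0 < m"
    and "0 < r2" and "r2 < r1" and "r1 < 1"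
    and "is_algorithm m M A"
  shows "comp_ratio m r1 r2 0 M A \<le> 1 / (2 - r2 / r1)
       \<and> (INF p \<in> {0<..<1}. comp_ratio m r1 r2 p M A) \<le> 1 / (2 - r2 / r1)"
proof
  show "comp_ratio m r1 r2 0 M A \<le> 1 / (2 - r2 / r1)"
    using comp_ratio_le[OF assms(1-3,5), of 0] by simp
next
  have bdd: "bdd_below ((\<lambda>p. comp_ratio m r1 r2 p M A) ` {0<..<1})"
    using comp_ratio_nonneg[OF assms(5)] assms(2,3) by (intro bdd_belowI2[where m=0]) auto
  show "(INF p \<in> {0<..<1}. comp_ratio m r1 r2 p M A) \<le> 1 / (2 - r2 / r1)"
  proof (rule field_le_epsilon)
    fix e :: real
    assume "0 < e"
    define K where "K = 2 * real (nat \<lceil>m\<rceil>) + 1"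
    define p where "p = min (1 / 2) (e / K)"
    have p: "0 < p" "p < 1"
      using \<open>0 < e\<close> by (auto simp: p_def K_def)
    have "2 * real (nat \<lceil>m\<rceil>) * p \<le> K * (e / K)"
      using p by (intro mult_mono) (auto simp: K_def p_def)
    also have "\<dots> = e"
      by (simp add: K_def)
    finally show "(INF p \<in> {0<..<1}. comp_ratio m r1 r2 p M A) \<le> 1 / (2 - r2 / r1) + e"
      using cINF_lower[OF bdd, of p] comp_ratio_le[OF assms(1-3,5), of p] p by simp
  qed
qed

end
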